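(* Let $(V,e)$ be a unital $\ast$-normed space and $\varepsilon>1/\|e\|$. Then $\|v\|_\varepsilon=\sup\{|\langle v,\varphi\rangle|:\varphi\in S_\varepsilon\}$, where $S_\varepsilon=V_{he}^\ast\cap\varepsilon\operatorname{ball}V^\ast$, defines a norm on $V$ equivalent to the original norm of $V$.
   Context: A $\ast$-normed space is a complex vector space with involution and norm satisfying $\|v^\ast\|=\|v\|$; $V^\ast$ has involution $\langle v,\varphi^\ast\rangle=\overline{\langle v^\ast,\varphi\rangle}$, $V_h^\ast$ is the set of hermitian bounded functionals, and for nonzero hermitian $e$, $V_{he}^\ast=\{y\in V_h^\ast:\langle e,y\rangle=1\}$. $(V,e)$ is a unital $\ast$-normed space if $V_{he}^\ast\cap\operatorname{ball}V^\ast\ne\varnothing$. *)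

theory Defs
  imports "HOL-Analysis.Analysis"
begin

text \<open>We model a complex
normed space as a real normed vector space 'a together with a complex scalar
multiplication sm extending the real one and compatible with the norm.\<close>

definition complex_normed_space :: "(complex \<Rightarrow> 'a::real_normed_vector \<Rightarrow> 'a) \<Rightarrow> bool" where
  "complex_normed_space sm \<longleftrightarrow>
     (\<forall>r v. sm (complex_of_real r) v = r *\<^sub>R v) \<and>
     (\<forall>a b v. sm (a * b) v = sm a (sm b v)) \<and>
     (\<forall>a b v. sm (a + b) v = sm a v + sm b v) \<and>
     (\<forall>a v w. sm a (v + w) = sm a v + sm a w) \<and>
     (\<forall>a v. norm (sm a v) = cmod a * norm v)"

definition star_normed_space ::
  "(complex \<Rightarrow> 'a::real_normed_vector \<Rightarrow> 'a) \<Rightarrow> ('a \<Rightarrow> 'a) \<Rightarrow> bool" where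
  "star_normed_space sm st \<longleftrightarrow>
     complex_normed_space sm \<and>
     (\<forall>v. st (st v) = v) \<and>
     (\<forall>v w. st (v + w) = st v + st w) \<and>
     (\<forall>a v. st (sm a v) = sm (cnj a) (st v)) \<and>
     (\<forall>v. norm (st v) = norm v)"

definition bounded_functional ::
  "(complex \<Rightarrow> 'a::real_normed_vector \<Rightarrow> 'a) \<Rightarrow> ('a \<Rightarrow> complex) \<Rightarrow> bool" where
  "bounded_functional sm \<phi> \<longleftrightarrow> bounded_linear \<phi> \<and> (\<forall>a v. \<phi> (sm a v) = a * \<phi> v)"

definition fstar :: "('a \<Rightarrow> 'a) \<Rightarrow> ('a \<Rightarrow> complex) \<Rightarrow> ('a \<Rightarrow> complex)" where
  "fstar st \<phi> = (\<lambda>v. cnj (\<phi> (st v)))"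

definition herm_functionals ::
  "(complex \<Rightarrow> 'a::real_normed_vector \<Rightarrow> 'a) \<Rightarrow> ('a \<Rightarrow> 'a) \<Rightarrow> ('a \<Rightarrow> complex) set" where
  "herm_functionals sm st = {\<phi>. bounded_functional sm \<phi> \<and> fstar st \<phi> = \<phi>}"

definition herm_e_functionals ::
  "(complex \<Rightarrow> 'a::real_normed_vector \<Rightarrow> 'a) \<Rightarrow> ('a \<Rightarrow> 'a) \<Rightarrow> 'a \<Rightarrow> ('a \<Rightarrow> complex) set" where
  "herm_e_functionals sm st e = {y \<in> herm_functionals sm st. y e = 1}"

definition unital_star_normed_space ::
  "(complex \<Rightarrow> 'a::real_normed_vector \<Rightarrow> 'a) \<Rightarrow> ('a \<Rightarrow> 'a) \<Rightarrow> 'a \<Rightarrow> bool" where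
  "unital_star_normed_space sm st e \<longleftrightarrow>
     star_normed_space sm st \<and> e \<noteq> 0 \<and> st e = e \<and>
     (\<exists>y \<in> herm_e_functionals sm st e. onorm y \<le> 1)"

definition S_eps ::
  "(complex \<Rightarrow> 'a::real_normed_vector \<Rightarrow> 'a) \<Rightarrow> ('a \<Rightarrow> 'a) \<Rightarrow> 'a \<Rightarrow> real \<Rightarrow> ('a \<Rightarrow> complex) set" where
  "S_eps sm st e \<epsilon> = {\<phi> \<in> herm_e_functionals sm st e. onorm \<phi> \<le> \<epsilon>}"

definition eps_norm ::
  "(complex \<Rightarrow> 'a::real_normed_vector \<Rightarrow> 'a) \<Rightarrow> ('a \<Rightarrow> 'a) \<Rightarrow> 'a \<Rightarrow> real \<Rightarrow> 'a \<Rightarrow> real" where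
  "eps_norm sm st e \<epsilon> v = Sup ((\<lambda>\<phi>. cmod (\<phi> v)) ` S_eps sm st e \<epsilon>)"

end

theory Submission
  imports Defs
begin

text \<open>The seminorm properties of \<open>\<parallel>v\<parallel>\<^sub>\<epsilon>\<close> and the bound \<open>\<parallel>v\<parallel>\<^sub>\<epsilon> \<le> \<epsilon> \<parallel>v\<parallel>\<close> are immediate
  from its definition as a supremum; the content is the lower bound. By Hahn-Banach every \<open>v\<close> has
  a functional \<open>\<phi>\<close> of norm one with \<open>Re \<phi>(v) = \<parallel>v\<parallel>\<close>; its hermitian parts
  \<open>h = (\<phi> + \<phi>\<^sup>*)/2\<close> and \<open>k = \<i>(\<phi>\<^sup>* - \<phi>)/2\<close> have norm at most one and \<open>\<phi> = h + \<i> k\<close>.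
  Applied to \<open>e\<close>, Hahn-Banach also yields \<open>h\<^sub>0 \<in> V\<^sub>h\<^sub>e\<^sup>*\<close> of norm \<open>1/\<parallel>e\<parallel>\<close>. For hermitian \<open>h\<close> of
  norm at most one and small \<open>t > 0\<close>, the functional \<open>(1 - t h(e)) h\<^sub>0 + t h\<close> lies in \<open>S\<^sub>\<epsilon>\<close>,
  so \<open>t |h(v)| \<le> (2 + t \<parallel>e\<parallel>) \<parallel>v\<parallel>\<^sub>\<epsilon>\<close>; hence \<open>\<parallel>v\<parallel> \<le> |h(v)| + |k(v)|\<close> is bounded by a multiple
  of \<open>\<parallel>v\<parallel>\<^sub>\<epsilon>\<close>.

  The real Hahn-Banach theorem is obtained from minimal sublinear functionals: Zorn's lemma gives
  a minimal sublinear functional below any sublinear one, and minimal sublinear functionals are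
  linear.\<close>

definition sublinear :: "('a::real_vector \<Rightarrow> real) \<Rightarrow> bool" where
  "sublinear p \<longleftrightarrow> p 0 = 0 \<and> (\<forall>x y. p (x + y) \<le> p x + p y)
     \<and> (\<forall>c x. 0 < c \<longrightarrow> p (c *\<^sub>R x) \<le> c * p x)"

lemma sublinear_zero: "sublinear p \<Longrightarrow> p 0 = 0"
  unfolding sublinear_def by blast

lemma sublinear_add_le: "sublinear p \<Longrightarrow> p (x + y) \<le> p x + p y"
  unfolding sublinear_def by blast

lemma sublinear_scaleR_le: "sublinear p \<Longrightarrow> 0 < c \<Longrightarrow> p (c *\<^sub>R x) \<le> c * p x"
  unfolding sublinear_def by blast

lemma sublinear_scaleR:
  assumes p: "sublinear p" and c: "0 \<le> c"
  shows "p (c *\<^sub>R x) = c * p x"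
proof (cases "c = 0")
  case True
  then show ?thesis using sublinear_zero[OF p] by simp
next
  case False
  with c have "0 < c" by simp
  have "p x = p (inverse c *\<^sub>R (c *\<^sub>R x))" using \<open>c \<noteq> 0\<close> by simp
  also have "\<dots> \<le> inverse c * p (c *\<^sub>R x)" by (intro sublinear_scaleR_le[OF p]) (simp add: \<open>0 < c\<close>)
  finally have "c * p x \<le> p (c *\<^sub>R x)" using \<open>0 < c\<close> by (simp add: field_simps)
  then show ?thesis using sublinear_scaleR_le[OF p \<open>0 < c\<close>, of x] by linarith
qed

lemma sublinear_neg_le: "sublinear p \<Longrightarrow> - p (- x) \<le> p x"
  using sublinear_add_le[of p x "- x"] sublinear_zero[of p] by simp

lemma sublinear_norm: "sublinear norm"
  unfolding sublinear_def by (auto simp: norm_triangle_ineq)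

text \<open>For sublinear \<open>p\<close>, \<open>descent p z\<close> is again sublinear, lies below \<open>p\<close>, and satisfies
  \<open>descent p z (- z) \<le> - p z\<close>; so a minimal sublinear functional is odd, hence linear.\<close>

definition descent :: "('a::real_vector \<Rightarrow> real) \<Rightarrow> 'a \<Rightarrow> 'a \<Rightarrow> real" where
  "descent p z x = (INF t\<in>{0..}. p (x + t *\<^sub>R z) - t * p z)"

lemma descent_bdd_below:
  assumes "sublinear p"
  shows "bdd_below ((\<lambda>t. p (x + t *\<^sub>R z) - t * p z) ` {0..})"
proof (rule bdd_belowI2)
  fix t :: real assume "t \<in> {0..}"
  have "p (x + t *\<^sub>R z + - x) \<le> p (x + t *\<^sub>R z) + p (- x)"
    by (rule sublinear_add_le[OF assms])
  then show "- p (- x) \<le> p (x + t *\<^sub>R z) - t * p z"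
    using sublinear_scaleR[OF assms, of t z] \<open>t \<in> {0..}\<close> by simp
qed

lemma descent_le: "sublinear p \<Longrightarrow> 0 \<le> t \<Longrightarrow> descent p z x \<le> p (x + t *\<^sub>R z) - t * p z"
  unfolding descent_def by (rule cINF_lower[OF descent_bdd_below]) auto

lemma le_descent: "(\<And>t. 0 \<le> t \<Longrightarrow> m \<le> p (x + t *\<^sub>R z) - t * p z) \<Longrightarrow> m \<le> descent p z x"
  unfolding descent_def by (rule cINF_greatest) auto

lemma descent_le_self: "sublinear p \<Longrightarrow> descent p z x \<le> p x"
  using descent_le[of p 0 z x] by simp

lemma descent_neg_le: "sublinear p \<Longrightarrow> descent p z (- z) \<le> - p z"
  using descent_le[of p 1 z "- z"] by (simp add: sublinear_zero)

lemma sublinear_descent: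
  assumes p: "sublinear p"
  shows "sublinear (descent p z)"
  unfolding sublinear_def
proof (intro conjI allI impI)
  show "descent p z 0 = 0"
  proof (rule antisym)
    show "descent p z 0 \<le> 0" using descent_le_self[OF p, of z 0] sublinear_zero[OF p] by simp
    show "0 \<le> descent p z 0" by (rule le_descent) (simp add: sublinear_scaleR[OF p])
  qed
next
  fix x y
  have "descent p z (x + y) - (p (y + t *\<^sub>R z) - t * p z) \<le> descent p z x" if "0 \<le> t" for t
  proof (rule le_descent)
    fix r :: real assume "0 \<le> r"
    have "descent p z (x + y) \<le> p ((x + y) + (r + t) *\<^sub>R z) - (r + t) * p z"
      using descent_le[OF p] \<open>0 \<le> r\<close> \<open>0 \<le> t\<close> by simp
    also have "(x + y) + (r + t) *\<^sub>R z = (x + r *\<^sub>R z) + (y + t *\<^sub>R z)"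
      by (simp add: algebra_simps)
    also have "p \<dots> \<le> p (x + r *\<^sub>R z) + p (y + t *\<^sub>R z)"
      by (rule sublinear_add_le[OF p])
    finally show "descent p z (x + y) - (p (y + t *\<^sub>R z) - t * p z) \<le> p (x + r *\<^sub>R z) - r * p z"
      by (simp add: algebra_simps)
  qed
  then have "descent p z (x + y) - descent p z x \<le> descent p z y"
    by (intro le_descent) (simp add: algebra_simps)
  then show "descent p z (x + y) \<le> descent p z x + descent p z y" by simp
next
  fix c :: real and x assume "0 < c"
  have "descent p z (c *\<^sub>R x) / c \<le> descent p z x"
  proof (rule le_descent)
    fix t :: real assume "0 \<le> t"
    have "descent p z (c *\<^sub>R x) \<le> p (c *\<^sub>R x + (c * t) *\<^sub>R z) - (c * t) * p z"
      using descent_le[OF p] \<open>0 < c\<close> \<open>0 \<le> t\<close> by simp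
    also have "c *\<^sub>R x + (c * t) *\<^sub>R z = c *\<^sub>R (x + t *\<^sub>R z)" by (simp add: algebra_simps)
    also have "p (c *\<^sub>R (x + t *\<^sub>R z)) = c * p (x + t *\<^sub>R z)"
      using sublinear_scaleR[OF p] \<open>0 < c\<close> by simp
    finally show "descent p z (c *\<^sub>R x) / c \<le> p (x + t *\<^sub>R z) - t * p z"
      using \<open>0 < c\<close> by (simp add: field_simps)
  qed
  then show "descent p z (c *\<^sub>R x) \<le> c * descent p z x" using \<open>0 < c\<close> by (simp add: field_simps)
qed

lemma minimal_sublinear_linear:
  assumes p: "sublinear p" and minimal: "\<And>q. sublinear q \<Longrightarrow> q \<le> p \<Longrightarrow> q = p"
  shows "linear p"
proof -
  have neg: "p (- z) = - p z" for z
  proof -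
    have "descent p z = p"
      using minimal[OF sublinear_descent[OF p]] descent_le_self[OF p] by (simp add: le_fun_def)
    then have "p (- z) \<le> - p z" using descent_neg_le[OF p, of z] by simp
    with sublinear_neg_le[OF p, of "- z"] show ?thesis by simp
  qed
  have add: "p (x + y) = p x + p y" for x y
    using sublinear_add_le[OF p, of x y] sublinear_add_le[OF p, of "x + y" "- y"] neg[of y] by simp
  have scale: "p (c *\<^sub>R x) = c * p x" for c x
  proof (cases "0 \<le> c")
    case True
    then show ?thesis by (rule sublinear_scaleR[OF p])
  next
    case False
    then have "p (c *\<^sub>R x) = - p ((- c) *\<^sub>R x)" using neg[of "(- c) *\<^sub>R x"] by simp
    also have "\<dots> = c * p x" using sublinear_scaleR[OF p, of "- c" x] False by simp
    finally show ?thesis .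
  qed
  show ?thesis by (rule linearI) (simp_all add: add scale)
qed

lemma sublinear_chain_Inf:
  assumes "C \<noteq> {}" and sub: "\<And>q. q \<in> C \<Longrightarrow> sublinear q"
    and chain: "\<And>q r. q \<in> C \<Longrightarrow> r \<in> C \<Longrightarrow> q \<le> r \<or> r \<le> q"
    and lower: "\<And>q. q \<in> C \<Longrightarrow> l \<le> q"
  shows "sublinear (\<lambda>x. INF q\<in>C. q x)" (is "sublinear ?u")
proof -
  have Inf_le: "?u x \<le> q x" if "q \<in> C" for q x
    using that lower by (intro cINF_lower bdd_belowI2[of _ "l x"]) (auto simp: le_fun_def)
  have le_Inf: "m \<le> ?u x" if "\<And>q. q \<in> C \<Longrightarrow> m \<le> q x" for m x
    using \<open>C \<noteq> {}\<close> that by (rule cINF_greatest)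
  obtain q0 where "q0 \<in> C" using \<open>C \<noteq> {}\<close> by blast
  show ?thesis
    unfolding sublinear_def
  proof (intro conjI allI impI)
    show "?u 0 = 0"
      using Inf_le[OF \<open>q0 \<in> C\<close>, of 0] le_Inf[of 0 0] sub sublinear_zero \<open>q0 \<in> C\<close>
      by (metis order.antisym order.refl)
  next
    fix x y
    have "?u (x + y) - r y \<le> ?u x" if "r \<in> C" for r
    proof (rule le_Inf)
      fix q assume "q \<in> C"
      \<comment> \<open>the smaller of \<open>q\<close> and \<open>r\<close> bounds both terms\<close>
      obtain m where "m \<in> C" "m \<le> q" "m \<le> r"
        using chain[OF \<open>q \<in> C\<close> \<open>r \<in> C\<close>] \<open>q \<in> C\<close> \<open>r \<in> C\<close> by auto
      have "?u (x + y) \<le> m x + m y"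
        using Inf_le[OF \<open>m \<in> C\<close>] sublinear_add_le[OF sub[OF \<open>m \<in> C\<close>]] by (rule order_trans)
      also have "\<dots> \<le> q x + r y" using \<open>m \<le> q\<close> \<open>m \<le> r\<close> by (simp add: le_fun_def add_mono)
      finally show "?u (x + y) - r y \<le> q x" by simp
    qed
    then have "?u (x + y) - ?u x \<le> ?u y" by (intro le_Inf) (simp add: algebra_simps)
    then show "?u (x + y) \<le> ?u x + ?u y" by simp
  next
    fix c :: real and x assume "0 < c"
    have "?u (c *\<^sub>R x) / c \<le> ?u x"
    proof (rule le_Inf)
      fix q assume "q \<in> C"
      have "?u (c *\<^sub>R x) \<le> c * q x"
        using Inf_le[OF \<open>q \<in> C\<close>] sublinear_scaleR_le[OF sub[OF \<open>q \<in> C\<close>] \<open>0 < c\<close>]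
        by (rule order_trans)
      then show "?u (c *\<^sub>R x) / c \<le> q x" using \<open>0 < c\<close> by (simp add: field_simps)
    qed
    then show "?u (c *\<^sub>R x) \<le> c * ?u x" using \<open>0 < c\<close> by (simp add: field_simps)
  qed
qed

lemma sublinear_minimal_below:
  assumes p: "sublinear p"
  obtains m where "sublinear m" "m \<le> p" "\<And>q. sublinear q \<Longrightarrow> q \<le> m \<Longrightarrow> q = m"
proof -
  define A where "A = {q. sublinear q \<and> q \<le> p}"
  have "partial_order_on A (relation_of (\<ge>) A)"
    by (rule partial_order_on_relation_ofI) auto
  moreover have "\<exists>u\<in>A. \<forall>q\<in>C. u \<le> q" if C: "C \<in> Chains (relation_of (\<ge>) A)" for C
  proof (cases "C = {}")
    case True
    then show ?thesis using p unfolding A_def by auto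
  next
    case False
    have CA: "C \<subseteq> A" using Chains_relation_of[OF C] .
    let ?u = "\<lambda>x. INF q\<in>C. q x"
    have lower: "(\<lambda>x. - p (- x)) \<le> q" if "q \<in> C" for q
    proof (rule le_funI)
      fix x
      have "sublinear q" "q \<le> p" using that CA unfolding A_def by auto
      then show "- p (- x) \<le> q x" using sublinear_neg_le[of q x] le_funD[of q p "- x"] by linarith
    qed
    have "sublinear ?u"
    proof (rule sublinear_chain_Inf[OF False _ _ lower])
      show "sublinear q" if "q \<in> C" for q using that CA unfolding A_def by auto
      show "q \<le> r \<or> r \<le> q" if "q \<in> C" "r \<in> C" for q r
        using C that unfolding Chains_def relation_of_def by auto
    qed
    moreover have "?u \<le> q" if "q \<in> C" for q
      using that lower by (auto simp: le_fun_def intro!: cINF_lower bdd_belowI2)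
    moreover obtain q0 where "q0 \<in> C" using False by blast
    moreover have "q0 \<le> p" using \<open>q0 \<in> C\<close> CA unfolding A_def by auto
    ultimately show ?thesis unfolding A_def by (blast intro: order_trans)
  qed
  ultimately obtain m where "m \<in> A" and "\<forall>q\<in>A. q \<le> m \<longrightarrow> q = m"
    using predicate_Zorn[of A "(\<ge>)"] by blast
  then show ?thesis using that unfolding A_def by (blast intro: order_trans)
qed

lemma sublinear_dominates_linear:
  assumes "sublinear p"
  obtains f where "linear f" "f \<le> p"
  using sublinear_minimal_below[OF assms] minimal_sublinear_linear by metis

lemma linear_norming_functional:
  fixes v :: "'a::real_normed_vector"
  obtains f where "linear f" "\<And>x. f x \<le> norm x" "f v = norm v"
proof -
  obtain f where f: "linear f" "f \<le> descent norm v"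
    using sublinear_dominates_linear[OF sublinear_descent[OF sublinear_norm]] by blast
  have "f x \<le> norm x" for x
    using le_funD[OF f(2), of x] descent_le_self[OF sublinear_norm, of v x] by linarith
  moreover have "- f v \<le> - norm v"
    using le_funD[OF f(2), of "- v"] descent_neg_le[OF sublinear_norm, of v] linear_neg[OF f(1), of v]
    by linarith
  ultimately show ?thesis using that f(1) by (metis antisym neg_le_iff_le)
qed

locale complex_normed =
  fixes sm :: "complex \<Rightarrow> 'a::real_normed_vector \<Rightarrow> 'a"
  assumes complex_normed_space: "complex_normed_space sm"
begin

lemma sm_of_real [simp]: "sm (of_real r) v = r *\<^sub>R v"
  using complex_normed_space unfolding complex_normed_space_def by blast

lemma sm_mult: "sm (a * b) v = sm a (sm b v)"
  using complex_normed_space unfolding complex_normed_space_def by blast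

lemma sm_add_scalar: "sm (a + b) v = sm a v + sm b v"
  using complex_normed_space unfolding complex_normed_space_def by blast

lemma sm_add: "sm a (v + w) = sm a v + sm a w"
  using complex_normed_space unfolding complex_normed_space_def by blast

lemma norm_sm: "norm (sm a v) = cmod a * norm v"
  using complex_normed_space unfolding complex_normed_space_def by blast

lemma sm_one [simp]: "sm 1 v = v"
  using sm_of_real[of 1 v] by simp

lemma sm_scaleR: "sm a (r *\<^sub>R v) = r *\<^sub>R sm a v"
proof -
  have "sm a (r *\<^sub>R v) = sm (a * of_real r) v" by (simp add: sm_mult)
  also have "\<dots> = r *\<^sub>R sm a v" by (simp add: mult.commute[of a] sm_mult)
  finally show ?thesis .
qed

lemma sm_ii: "sm \<i> (sm \<i> v) = - v"
  using sm_mult[of \<i> \<i> v] sm_of_real[of "-1" v] by simp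

lemma sm_Re_Im: "sm a v = Re a *\<^sub>R v + Im a *\<^sub>R sm \<i> v"
proof -
  have "a = of_real (Re a) + of_real (Im a) * \<i>" by (simp add: complex_eq_iff)
  then have "sm a v = sm (of_real (Re a) + of_real (Im a) * \<i>) v"
    by (rule arg_cong[where f = "\<lambda>a. sm a v"])
  also have "\<dots> = Re a *\<^sub>R v + Im a *\<^sub>R sm \<i> v" by (simp only: sm_add_scalar sm_mult sm_of_real)
  finally show ?thesis .
qed

lemma complex_norming_functional:
  obtains \<phi> where "bounded_functional sm \<phi>" "\<And>x. cmod (\<phi> x) \<le> norm x" "Re (\<phi> v) = norm v"
proof -
  obtain f where f: "linear f" "\<And>x. f x \<le> norm x" "f v = norm v"
    using linear_norming_functional by blast
  define \<phi> where "\<phi> x = of_real (f x) - \<i> * of_real (f (sm \<i> x))" for x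
  have add: "\<phi> (x + y) = \<phi> x + \<phi> y" for x y
    unfolding \<phi>_def by (simp add: sm_add linear_add[OF f(1)] algebra_simps)
  have scaleR: "\<phi> (r *\<^sub>R x) = r *\<^sub>R \<phi> x" for r x
    unfolding \<phi>_def by (simp add: sm_scaleR linear_scale[OF f(1)] algebra_simps scaleR_conv_of_real)
  have ii: "\<phi> (sm \<i> x) = \<i> * \<phi> x" for x
    unfolding \<phi>_def by (simp add: sm_ii linear_neg[OF f(1)] algebra_simps)
  have hom: "\<phi> (sm a x) = a * \<phi> x" for a x
  proof -
    have "\<phi> (sm a x) = Re a *\<^sub>R \<phi> x + Im a *\<^sub>R (\<i> * \<phi> x)"
      by (subst sm_Re_Im) (simp add: add scaleR ii)
    also have "\<dots> = (of_real (Re a) + \<i> * of_real (Im a)) * \<phi> x"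
      by (simp add: scaleR_conv_of_real algebra_simps)
    also have "\<dots> = a * \<phi> x"
      by (simp flip: complex_eq)
    finally show ?thesis .
  qed
  have Re: "Re (\<phi> x) = f x" for x
    unfolding \<phi>_def by simp
  have bound: "cmod (\<phi> x) \<le> norm x" for x
  proof -
    \<comment> \<open>rotate \<open>\<phi> x\<close> onto the positive real axis\<close>
    define u where "u = cnj (sgn (\<phi> x))"
    have "u * \<phi> x = of_real (cmod (\<phi> x))"
    proof (cases "\<phi> x = 0")
      case False
      have "u * \<phi> x = cnj (\<phi> x) * \<phi> x / of_real (cmod (\<phi> x))"
        unfolding u_def by (simp add: sgn_eq)
      also have "\<dots> = of_real (cmod (\<phi> x))"
        using False by (simp add: complex_norm_square[symmetric] mult.commute power2_eq_square)
      finally show ?thesis .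
    qed (simp add: u_def)
    then have "cmod (\<phi> x) = f (sm u x)" using hom[of u x] Re[of "sm u x"] by simp
    also have "\<dots> \<le> norm (sm u x)" by (rule f(2))
    also have "\<dots> \<le> norm x"
      unfolding norm_sm u_def by (simp add: norm_sgn mult_left_le_one_le)
    finally show ?thesis .
  qed
  have "bounded_linear \<phi>"
    by (rule bounded_linear_intro[where K=1]) (simp_all add: add scaleR bound)
  moreover have "Re (\<phi> v) = norm v" using Re f(3) by simp
  ultimately show ?thesis using that hom bound unfolding bounded_functional_def by blast
qed

end

locale star_normed =
  fixes sm :: "complex \<Rightarrow> 'a::real_normed_vector \<Rightarrow> 'a" and st :: "'a \<Rightarrow> 'a"
  assumes star_normed_space: "star_normed_space sm st"

sublocale star_normed \<subseteq> complex_normed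
  using star_normed_space by unfold_locales (simp add: star_normed_space_def)

context star_normed
begin

lemma st_st [simp]: "st (st v) = v"
  using star_normed_space unfolding star_normed_space_def by blast

lemma st_add: "st (v + w) = st v + st w"
  using star_normed_space unfolding star_normed_space_def by blast

lemma st_sm: "st (sm a v) = sm (cnj a) (st v)"
  using star_normed_space unfolding star_normed_space_def by blast

lemma norm_st: "norm (st v) = norm v"
  using star_normed_space unfolding star_normed_space_def by blast

lemma st_scaleR: "st (r *\<^sub>R v) = r *\<^sub>R st v"
  using st_sm[of "of_real r" v] by simp

lemma bounded_linear_st: "bounded_linear st"
  by (rule bounded_linear_intro[where K=1]) (simp_all add: st_add st_scaleR norm_st)

lemma herm_functionals_hermitian_part:
  assumes "bounded_functional sm \<phi>"
  shows "(\<lambda>x. \<alpha> * \<phi> x + cnj \<alpha> * cnj (\<phi> (st x))) \<in> herm_functionals sm st"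
proof -
  have \<phi>: "bounded_linear \<phi>" "\<And>a x. \<phi> (sm a x) = a * \<phi> x"
    using assms unfolding bounded_functional_def by blast+
  have "bounded_linear (\<lambda>x. \<alpha> * \<phi> x + cnj \<alpha> * cnj (\<phi> (st x)))"
    using \<phi>(1) bounded_linear_compose[OF \<phi>(1) bounded_linear_st]
    by (intro bounded_linear_add bounded_linear_compose[OF bounded_linear_mult_right]
        bounded_linear_compose[OF bounded_linear_cnj])
  then show ?thesis
    unfolding herm_functionals_def bounded_functional_def fstar_def
    by (simp add: \<phi>(2) st_sm algebra_simps)
qed

lemma norm_hermitian_part_le:
  assumes "\<And>x. cmod (\<phi> x) \<le> norm x"
  shows "cmod (\<alpha> * \<phi> x + cnj \<alpha> * cnj (\<phi> (st x))) \<le> 2 * cmod \<alpha> * norm x"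
proof -
  have "cmod (\<alpha> * \<phi> x + cnj \<alpha> * cnj (\<phi> (st x))) \<le> cmod \<alpha> * cmod (\<phi> x) + cmod \<alpha> * cmod (\<phi> (st x))"
    using norm_triangle_ineq[of "\<alpha> * \<phi> x" "cnj \<alpha> * cnj (\<phi> (st x))"] by (simp add: norm_mult)
  also have "\<dots> = cmod \<alpha> * (cmod (\<phi> x) + cmod (\<phi> (st x)))" by (simp add: distrib_left)
  also have "\<dots> \<le> cmod \<alpha> * (2 * norm x)"
    using assms[of x] assms[of "st x"] by (intro mult_left_mono) (simp_all add: norm_st)
  finally show ?thesis by simp
qed

lemma herm_functionals_scaleR:
  "h \<in> herm_functionals sm st \<Longrightarrow> (\<lambda>x. of_real r * h x) \<in> herm_functionals sm st"
  unfolding herm_functionals_def bounded_functional_def fstar_def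
  by (auto simp: bounded_linear_mult_right bounded_linear_compose fun_eq_iff dest: fun_cong)

lemma herm_functionals_add:
  "h \<in> herm_functionals sm st \<Longrightarrow> k \<in> herm_functionals sm st
    \<Longrightarrow> (\<lambda>x. h x + k x) \<in> herm_functionals sm st"
  unfolding herm_functionals_def bounded_functional_def fstar_def
  by (auto simp: bounded_linear_add algebra_simps fun_eq_iff dest: fun_cong)

lemma herm_functional_real_at_hermitian:
  assumes "h \<in> herm_functionals sm st" and "st x = x"
  shows "h x = of_real (Re (h x))"
proof -
  have "cnj (h x) = h x"
    using assms fun_cong[of "fstar st h" h x] unfolding herm_functionals_def fstar_def by simp
  then show ?thesis by (simp add: complex_eq_iff)
qed

lemma norm_le_herm_functionals:
  obtains h k where "h \<in> herm_functionals sm st" "k \<in> herm_functionals sm st"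
    and "\<And>x. cmod (h x) \<le> norm x" "\<And>x. cmod (k x) \<le> norm x"
    and "norm v \<le> cmod (h v) + cmod (k v)"
proof -
  obtain \<phi> where \<phi>: "bounded_functional sm \<phi>" "\<And>x. cmod (\<phi> x) \<le> norm x" "Re (\<phi> v) = norm v"
    using complex_norming_functional by blast
  define h where "h x = 1/2 * \<phi> x + cnj (1/2) * cnj (\<phi> (st x))" for x
  define k where "k x = - \<i>/2 * \<phi> x + cnj (- \<i>/2) * cnj (\<phi> (st x))" for x
  have "h \<in> herm_functionals sm st" "k \<in> herm_functionals sm st"
    unfolding h_def[abs_def] k_def[abs_def] by (intro herm_functionals_hermitian_part[OF \<phi>(1)])+
  moreover have "cmod (h x) \<le> norm x" "cmod (k x) \<le> norm x" for x
    unfolding h_def k_def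
    using norm_hermitian_part_le[OF \<phi>(2), of "1/2" x] norm_hermitian_part_le[OF \<phi>(2), of "- \<i>/2" x]
    by (simp_all add: norm_divide)
  moreover have "norm v \<le> cmod (h v) + cmod (k v)"
  proof -
    have "\<phi> v = h v + \<i> * k v"
      unfolding h_def k_def by (simp add: algebra_simps)
    then show ?thesis
      using \<phi>(3) abs_Re_le_cmod[of "\<phi> v"] norm_triangle_ineq[of "h v" "\<i> * k v"]
      by (simp add: norm_mult)
  qed
  ultimately show ?thesis using that by blast
qed

lemma unit_herm_functional:
  assumes "st e = e" and "e \<noteq> 0"
  obtains h where "h \<in> herm_e_functionals sm st e" "\<And>x. cmod (h x) \<le> norm x / norm e"
proof -
  obtain \<phi> where \<phi>: "bounded_functional sm \<phi>" "\<And>x. cmod (\<phi> x) \<le> norm x" "Re (\<phi> e) = norm e"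
    using complex_norming_functional by blast
  define h1 where "h1 x = 1/2 * \<phi> x + cnj (1/2) * cnj (\<phi> (st x))" for x
  have h1: "h1 \<in> herm_functionals sm st" "\<And>x. cmod (h1 x) \<le> norm x"
    unfolding h1_def[abs_def] using herm_functionals_hermitian_part[OF \<phi>(1), of "1/2"]
      norm_hermitian_part_le[OF \<phi>(2), of "1/2"] by simp_all
  have "h1 e = of_real (norm e)"
    unfolding h1_def assms(1) using \<phi>(3) by (simp add: complex_eq_iff)
  moreover have "(\<lambda>x. of_real (1 / norm e) * h1 x) \<in> herm_functionals sm st"
    by (rule herm_functionals_scaleR[OF h1(1)])
  moreover have "cmod (of_real (1 / norm e) * h1 x) \<le> norm x / norm e" for x
    using h1(2)[of x] by (simp add: norm_divide divide_right_mono)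
  ultimately show ?thesis
    using that[of "\<lambda>x. of_real (1 / norm e) * h1 x"] \<open>e \<noteq> 0\<close>
    unfolding herm_e_functionals_def by simp
qed

end

locale eps_norm_setting = star_normed sm st
  for sm :: "complex \<Rightarrow> 'a::real_normed_vector \<Rightarrow> 'a" and st +
  fixes e :: 'a and \<epsilon> :: real
  assumes st_e: "st e = e" and e_nonzero: "e \<noteq> 0" and eps_gt: "1 / norm e < \<epsilon>"
begin

abbreviation S where "S \<equiv> S_eps sm st e \<epsilon>"
abbreviation N where "N \<equiv> eps_norm sm st e \<epsilon>"

lemma eps_pos: "0 < \<epsilon>"
proof -
  have "0 < 1 / norm e" using e_nonzero by simp
  with eps_gt show ?thesis by linarith
qed

lemma S_eps_subset: "S \<subseteq> herm_e_functionals sm st e"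
  unfolding S_eps_def by blast

lemma S_eps_hom: "\<phi> \<in> S \<Longrightarrow> \<phi> (sm a x) = a * \<phi> x"
  unfolding S_eps_def herm_e_functionals_def herm_functionals_def bounded_functional_def by blast

lemma S_eps_bounded_linear: "\<phi> \<in> S \<Longrightarrow> bounded_linear \<phi>"
  unfolding S_eps_def herm_e_functionals_def herm_functionals_def bounded_functional_def by blast

lemma S_epsI:
  assumes "h \<in> herm_e_functionals sm st e" and "\<And>x. cmod (h x) \<le> \<epsilon> * norm x"
  shows "h \<in> S"
  using assms onorm_bound[of \<epsilon> h] eps_pos unfolding S_eps_def by auto

lemma S_eps_bound:
  assumes "\<phi> \<in> S"
  shows "cmod (\<phi> x) \<le> \<epsilon> * norm x"
proof -
  have "cmod (\<phi> x) \<le> onorm \<phi> * norm x"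
    using onorm S_eps_bounded_linear[OF assms] by blast
  also have "\<dots> \<le> \<epsilon> * norm x"
    using assms unfolding S_eps_def by (auto intro: mult_right_mono)
  finally show ?thesis .
qed

lemma unit_functional_in_S_eps:
  obtains h0 where "h0 \<in> S" "\<And>x. cmod (h0 x) \<le> norm x / norm e"
proof -
  obtain h0 where h0: "h0 \<in> herm_e_functionals sm st e" "\<And>x. cmod (h0 x) \<le> norm x / norm e"
    using unit_herm_functional[OF st_e e_nonzero] by blast
  have "norm x / norm e \<le> \<epsilon> * norm x" for x
    using eps_gt mult_right_mono[of "1 / norm e" \<epsilon> "norm x"] by simp
  then have "h0 \<in> S" using h0 by (intro S_epsI) (auto intro: order_trans)
  then show ?thesis using that h0(2) by blast
qed

lemma S_eps_nonempty: "S \<noteq> {}"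
  using unit_functional_in_S_eps by blast

lemma eps_norm_upper: "\<phi> \<in> S \<Longrightarrow> cmod (\<phi> v) \<le> N v"
  unfolding eps_norm_def by (rule cSup_upper) (auto intro: bdd_aboveI2 S_eps_bound)

lemma eps_norm_least: "(\<And>\<phi>. \<phi> \<in> S \<Longrightarrow> cmod (\<phi> v) \<le> M) \<Longrightarrow> N v \<le> M"
  unfolding eps_norm_def using S_eps_nonempty by (intro cSup_least) auto

lemma eps_norm_nonneg: "0 \<le> N v"
  using S_eps_nonempty eps_norm_upper norm_ge_zero order_trans by blast

lemma eps_norm_le: "N v \<le> \<epsilon> * norm v"
  by (intro eps_norm_least S_eps_bound)

lemma eps_norm_triangle: "N (v + w) \<le> N v + N w"
proof (rule eps_norm_least)
  fix \<phi> assume "\<phi> \<in> S"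
  have "cmod (\<phi> (v + w)) \<le> cmod (\<phi> v) + cmod (\<phi> w)"
    using S_eps_bounded_linear[OF \<open>\<phi> \<in> S\<close>] by (simp add: linear_simps norm_triangle_ineq)
  also have "\<dots> \<le> N v + N w"
    using \<open>\<phi> \<in> S\<close> by (intro add_mono eps_norm_upper)
  finally show "cmod (\<phi> (v + w)) \<le> N v + N w" .
qed

lemma eps_norm_sm_le: "N (sm a v) \<le> cmod a * N v"
  by (rule eps_norm_least) (simp add: S_eps_hom norm_mult mult_left_mono eps_norm_upper)

lemma eps_norm_sm: "N (sm a v) = cmod a * N v"
proof (cases "a = 0")
  case True
  then have "sm a v = 0" using sm_of_real[of 0 v] by simp
  then show ?thesis using True eps_norm_le[of 0] eps_norm_nonneg[of 0] by simp
next
  case False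
  have "N v = N (sm (inverse a) (sm a v))" using False by (simp flip: sm_mult)
  also have "\<dots> \<le> cmod (inverse a) * N (sm a v)" by (rule eps_norm_sm_le)
  finally have "N v \<le> N (sm a v) / cmod a" by (simp add: norm_inverse divide_inverse mult.commute)
  then have "cmod a * N v \<le> N (sm a v)" using False by (simp add: pos_le_divide_eq mult.commute)
  with eps_norm_sm_le show ?thesis by (rule antisym)
qed

lemma herm_functional_le_eps_norm:
  assumes h: "h \<in> herm_functionals sm st" and h_le: "\<And>x. cmod (h x) \<le> norm x"
    and t: "0 < t" "1 / norm e + 2 * t \<le> \<epsilon>"
  shows "t * cmod (h v) \<le> (2 + t * norm e) * N v"
proof -
  obtain h0 where h0: "h0 \<in> S" "\<And>x. cmod (h0 x) \<le> norm x / norm e"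
    using unit_functional_in_S_eps by blast
  have h0e: "h0 \<in> herm_e_functionals sm st e" using h0(1) S_eps_subset by blast
  define r where "r = Re (h e)"
  have h_e: "h e = of_real r"
    unfolding r_def by (rule herm_functional_real_at_hermitian[OF h st_e])
  have "\<bar>t * r\<bar> \<le> t * norm e"
    using h_le[of e] h_e t(1) by (simp add: abs_mult)
  then have r_bound: "\<bar>1 - t * r\<bar> \<le> 1 + t * norm e" by linarith
  define g where "g x = of_real (1 - t * r) * h0 x + of_real t * h x" for x
  have g_norm: "cmod (g x) \<le> \<bar>1 - t * r\<bar> * cmod (h0 x) + t * cmod (h x)" for x
  proof -
    have "cmod (g x) \<le> cmod (of_real (1 - t * r) * h0 x) + cmod (of_real t * h x)"
      unfolding g_def by (rule norm_triangle_ineq)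
    then show ?thesis using t(1) by (simp only: norm_mult norm_of_real abs_of_pos)
  qed
  have "g \<in> S"
  proof (rule S_epsI)
    have "g \<in> herm_functionals sm st"
      unfolding g_def[abs_def] using h0e h
      by (intro herm_functionals_add herm_functionals_scaleR) (auto simp: herm_e_functionals_def)
    moreover have "g e = 1"
      using h0e h_e unfolding g_def herm_e_functionals_def by simp
    ultimately show "g \<in> herm_e_functionals sm st e"
      unfolding herm_e_functionals_def by blast
  next
    fix x
    have "cmod (g x) \<le> (1 + t * norm e) * (norm x / norm e) + t * norm x"
      using g_norm[of x] r_bound h0(2)[of x] h_le[of x] t(1)
      by (smt (verit) mult_mono mult_left_mono norm_ge_zero divide_nonneg_nonneg)
    also have "\<dots> = (1 / norm e + 2 * t) * norm x"
      using e_nonzero by (simp add: field_simps)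
    also have "\<dots> \<le> \<epsilon> * norm x"
      using t(2) by (intro mult_right_mono) auto
    finally show "cmod (g x) \<le> \<epsilon> * norm x" .
  qed
  have "of_real t * h v = g v - of_real (1 - t * r) * h0 v"
    unfolding g_def by simp
  then have "t * cmod (h v) = cmod (g v - of_real (1 - t * r) * h0 v)"
    using t(1) by (metis abs_of_pos norm_mult norm_of_real)
  also have "\<dots> \<le> cmod (g v) + \<bar>1 - t * r\<bar> * cmod (h0 v)"
    using norm_triangle_ineq4[of "g v" "of_real (1 - t * r) * h0 v"]
    by (simp only: norm_mult norm_of_real)
  also have "\<dots> \<le> N v + (1 + t * norm e) * N v"
    using eps_norm_upper[OF \<open>g \<in> S\<close>] eps_norm_upper[OF h0(1)] r_bound eps_norm_nonneg
    by (intro add_mono mult_mono) auto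
  finally show ?thesis by (simp add: algebra_simps)
qed

lemma eps_norm_bounded_below:
  obtains c where "0 < c" "\<And>v. c * norm v \<le> N v"
proof -
  define t where "t = (\<epsilon> - 1 / norm e) / 2"
  have t: "0 < t" "1 / norm e + 2 * t \<le> \<epsilon>"
    using eps_gt e_nonzero unfolding t_def by (auto simp: field_simps)
  have "t * norm v \<le> 2 * ((2 + t * norm e) * N v)" for v
  proof -
    obtain h k where "h \<in> herm_functionals sm st" "k \<in> herm_functionals sm st"
      and "\<And>x. cmod (h x) \<le> norm x" "\<And>x. cmod (k x) \<le> norm x"
      and v: "norm v \<le> cmod (h v) + cmod (k v)"
      using norm_le_herm_functionals by blast
    then have "t * cmod (h v) \<le> (2 + t * norm e) * N v" "t * cmod (k v) \<le> (2 + t * norm e) * N v"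
      using herm_functional_le_eps_norm t by blast+
    moreover have "t * norm v \<le> t * cmod (h v) + t * cmod (k v)"
      using v t(1) by (simp add: distrib_left[symmetric])
    ultimately show ?thesis by linarith
  qed
  moreover have "0 < 2 * (2 + t * norm e)" using t(1) by (intro mult_pos_pos add_pos_nonneg) auto
  ultimately show ?thesis
    using that[of "t / (2 * (2 + t * norm e))"] t(1) by (simp add: field_simps)
qed

lemma eps_norm_eq_0_iff: "N v = 0 \<longleftrightarrow> v = 0"
proof
  obtain c where "0 < c" "\<And>v. c * norm v \<le> N v" using eps_norm_bounded_below by blast
  show "v = 0" if "N v = 0"
    using \<open>0 < c\<close> \<open>c * norm v \<le> N v\<close> that by (simp add: mult_le_0_iff)
  show "N v = 0" if "v = 0"
    using that eps_norm_le[of 0] eps_norm_nonneg[of 0] by simp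
qed

end

theorem corollary4p4:
  fixes sm :: "complex \<Rightarrow> 'a::real_normed_vector \<Rightarrow> 'a"
    and st :: "'a \<Rightarrow> 'a" and e :: 'a and \<epsilon> :: real
  assumes "unital_star_normed_space sm st e"
    and "\<epsilon> > 1 / norm e"
  shows "(\<forall>v. eps_norm sm st e \<epsilon> v = 0 \<longleftrightarrow> v = 0)
    \<and> (\<forall>v w. eps_norm sm st e \<epsilon> (v + w) \<le> eps_norm sm st e \<epsilon> v + eps_norm sm st e \<epsilon> w)
    \<and> (\<forall>a v. eps_norm sm st e \<epsilon> (sm a v) = cmod a * eps_norm sm st e \<epsilon> v)
    \<and> (\<exists>c C. 0 < c \<and> 0 < C \<and>
         (\<forall>v. c * norm v \<le> eps_norm sm st e \<epsilon> v \<and> eps_norm sm st e \<epsilon> v \<le> C * norm v))"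
proof -
  interpret eps_norm_setting sm st e \<epsilon>
    using assms unfolding unital_star_normed_space_def
    by unfold_locales auto
  obtain c where "0 < c" "\<And>v. c * norm v \<le> eps_norm sm st e \<epsilon> v"
    using eps_norm_bounded_below by blast
  then show ?thesis
    using eps_norm_eq_0_iff eps_norm_triangle eps_norm_sm eps_norm_le eps_pos by blast
qed

end
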